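(* Let $\mathcal{S}=(\mathscr{X},\nabla_{\mathcal{S}})$ be a non-commutative spacetime, $\mathscr{Y}$ a quantale, and $f:\mathscr{X}\to\mathscr{Y}$ a join-preserving strict monoidal order embedding with left adjoint $f_!:\mathscr{Y}\to\mathscr{X}$, and let $\nabla=f\circ\nabla_{\mathcal{S}}\circ f_!:\mathscr{Y}\to\mathscr{Y}$. If $\mathcal{S}$ satisfies $(wF)$ then so does $(\mathscr{Y},\nabla)$, and if $\mathcal{S}$ satisfies $(F)$ then so does $(\mathscr{Y},\nabla)$.
   Context: A quantale is a monoidal poset (monoid with multiplication monotone in each argument) having all joins, with multiplication distributing over arbitrary joins in each argument. A non-commutative spacetime is $(\mathscr{X},\nabla)$ with $\mathscr{X}$ a quantale and $\nabla$ join preserving and oplax monoidal ($\nabla e\le e$, $\nabla(a\otimes b)\le\nabla a\otimes\nabla b$). Strict monoidal: $f(e)=e$, $f(a\otimes b)=f(a)\otimes f(b)$; order embedding: $f(a)\le f(b)$ implies $a\le b$; $f_!$ left adjoint: $f_!(y)\le x$ iff $y\le f(x)$. A pair $(\mathscr{Z},\nabla)$ satisfies $(F)$ if $a\le\nabla a$ for all $a$, and $(wF)$ if $\nabla a=0$ (least element) implies $a=0$. *)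

theory Defs
  imports Main
begin

definition join_preserving :: "('a::complete_lattice \<Rightarrow> 'b::complete_lattice) \<Rightarrow> bool" where
  "join_preserving f \<longleftrightarrow> (\<forall>S. f (Sup S) = Sup (f ` S))"

definition quantale :: "('a::complete_lattice \<Rightarrow> 'a \<Rightarrow> 'a) \<Rightarrow> 'a \<Rightarrow> bool" where
  "quantale mult e \<longleftrightarrow>
     (\<forall>a b c. mult (mult a b) c = mult a (mult b c)) \<and>
     (\<forall>a. mult e a = a \<and> mult a e = a) \<and>
     (\<forall>a b c. a \<le> b \<longrightarrow> mult a c \<le> mult b c \<and> mult c a \<le> mult c b) \<and>
     (\<forall>a S. mult a (Sup S) = Sup ((\<lambda>b. mult a b) ` S)) \<and>
     (\<forall>a S. mult (Sup S) a = Sup ((\<lambda>b. mult b a) ` S))"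

definition nc_spacetime :: "('a::complete_lattice \<Rightarrow> 'a \<Rightarrow> 'a) \<Rightarrow> 'a \<Rightarrow> ('a \<Rightarrow> 'a) \<Rightarrow> bool" where
  "nc_spacetime mult e nabla \<longleftrightarrow>
     quantale mult e \<and> join_preserving nabla \<and>
     nabla e \<le> e \<and> (\<forall>a b. nabla (mult a b) \<le> mult (nabla a) (nabla b))"

definition strict_monoidal ::
  "('a \<Rightarrow> 'a \<Rightarrow> 'a) \<Rightarrow> 'a \<Rightarrow> ('b \<Rightarrow> 'b \<Rightarrow> 'b) \<Rightarrow> 'b \<Rightarrow> ('a \<Rightarrow> 'b) \<Rightarrow> bool" where
  "strict_monoidal multX eX multY eY f \<longleftrightarrow>
     f eX = eY \<and> (\<forall>a b. f (multX a b) = multY (f a) (f b))"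

definition order_embedding :: "('a::order \<Rightarrow> 'b::order) \<Rightarrow> bool" where
  "order_embedding f \<longleftrightarrow> (\<forall>a b. f a \<le> f b \<longrightarrow> a \<le> b)"

definition left_adjoint :: "('b::order \<Rightarrow> 'a::order) \<Rightarrow> ('a \<Rightarrow> 'b) \<Rightarrow> bool" where
  "left_adjoint g f \<longleftrightarrow> (\<forall>x y. g y \<le> x \<longleftrightarrow> y \<le> f x)"

definition cond_F :: "('a::order \<Rightarrow> 'a) \<Rightarrow> bool" where
  "cond_F nabla \<longleftrightarrow> (\<forall>a. a \<le> nabla a)"

definition cond_wF :: "('a::complete_lattice \<Rightarrow> 'a) \<Rightarrow> bool" where
  "cond_wF nabla \<longleftrightarrow> (\<forall>a. nabla a = bot \<longrightarrow> a = bot)"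

end

theory Submission
  imports Defs
begin

text \<open>Only the order-theoretic data matter: the unit of the adjunction gives
  \<open>y \<le> f (f\<^sub>! y)\<close>, which transports (F), and \<open>f\<^sub>! y = \<bottom>\<close> forces
  \<open>y \<le> f \<bottom> = \<bottom>\<close>, which together with reflection of the order by \<open>f\<close>
  transports (wF).\<close>

lemma join_preserving_bot:
  assumes "join_preserving f"
  shows "f bot = bot"
  using assms unfolding join_preserving_def by (metis Sup_empty image_empty)

lemma left_adjoint_unit:
  assumes "left_adjoint g f"
  shows "y \<le> f (g y)"
  using assms unfolding left_adjoint_def by blast

lemma left_adjoint_counit:
  assumes "left_adjoint g f"
  shows "g (f x) \<le> x"
  using assms unfolding left_adjoint_def by blast

lemma left_adjoint_mono_right:
  fixes f :: "'a::order \<Rightarrow> 'b::order"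
  assumes "left_adjoint g f"
  shows "mono f"
proof (rule monoI)
  fix a b :: 'a assume "a \<le> b"
  with left_adjoint_counit[OF assms] have "g (f a) \<le> b" by (rule order_trans)
  then show "f a \<le> f b" using assms unfolding left_adjoint_def by blast
qed

lemma cond_F_conj_adjoint:
  assumes "left_adjoint g f" and "cond_F nabla"
  shows "cond_F (f \<circ> nabla \<circ> g)"
  unfolding cond_F_def
proof
  fix y
  have "y \<le> f (g y)" using assms(1) by (rule left_adjoint_unit)
  also have "\<dots> \<le> f (nabla (g y))"
    using assms(2) left_adjoint_mono_right[OF assms(1)] by (simp add: cond_F_def monoD)
  finally show "y \<le> (f \<circ> nabla \<circ> g) y" by simp
qed

lemma cond_wF_conj_adjoint:
  assumes adj: "left_adjoint g f" and emb: "order_embedding f" and "f bot = bot"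
    and wF: "cond_wF nabla"
  shows "cond_wF (f \<circ> nabla \<circ> g)"
  unfolding cond_wF_def
proof (intro allI impI)
  fix y assume "(f \<circ> nabla \<circ> g) y = bot"
  then have "f (nabla (g y)) \<le> f bot" using \<open>f bot = bot\<close> by simp
  then have "nabla (g y) \<le> bot" using emb unfolding order_embedding_def by blast
  then have "nabla (g y) = bot" by (simp add: bot_unique)
  then have "g y = bot" using wF by (simp add: cond_wF_def)
  then have "y \<le> f bot" using left_adjoint_unit[OF adj, of y] by simp
  then show "y = bot" using \<open>f bot = bot\<close> by (simp add: bot_unique)
qed

theorem lemma8p9:
  fixes multX :: "'a::complete_lattice \<Rightarrow> 'a \<Rightarrow> 'a" and eX :: 'a
    and nablaS :: "'a \<Rightarrow> 'a"
    and multY :: "'b::complete_lattice \<Rightarrow> 'b \<Rightarrow> 'b" and eY :: 'b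
    and f :: "'a \<Rightarrow> 'b" and f_l :: "'b \<Rightarrow> 'a"
  assumes "nc_spacetime multX eX nablaS"
    and "quantale multY eY"
    and "join_preserving f"
    and "strict_monoidal multX eX multY eY f"
    and "order_embedding f"
    and "left_adjoint f_l f"
  shows "(cond_wF nablaS \<longrightarrow> cond_wF (f \<circ> nablaS \<circ> f_l))
       \<and> (cond_F nablaS \<longrightarrow> cond_F (f \<circ> nablaS \<circ> f_l))"
  using cond_wF_conj_adjoint[OF assms(6,5) join_preserving_bot[OF assms(3)]]
    cond_F_conj_adjoint[OF assms(6)]
  by blast

end
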